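(* Let $\mathcal C$ be an operadic category. The unit $U$ of $\mathrm{Coll}_{\mathcal C}$ has a unique right $U$-module structure, and with it $U$ is the unit of $\mathrm{Coll}_{\mathcal C}^U$. For right $U$-modules (equivalently presheaves on $\mathbb C$) $X$ and $Y$, the tensor product $X\wedge Y$ is the quotient of $X*Y$ by the equivalence relation generated by $(x,\pi\varphi,y)\sim(x\pi,\varphi,y_\pi)$, where $\varphi:c\to d'$ is in $\mathcal C$, $\pi:d'\to d$ is in $\mathbb C$, $x\in X_d$, $y=(y_i)_{i\in|d|}$ with $y_i\in Y_{(\pi\varphi)^{-1}i}$, and $y_\pi$ is the $|d'|$-indexed family with $(y_\pi)_{i'}=y_{|\pi|(i')}$. Moreover, if $\sigma:c'\to c$ is in $\mathbb C$, then the $\mathbb C$-action on $X\wedge Y$ is given by $[x,\varphi,y]\sigma=[x,\varphi\sigma,y\sigma]$, where $\varphi:c\to d$, $x\in X_d$, $y=(y_i\in Y_{\varphi^{-1}i})_{i\in|d|}$, and $y\sigma$ is the $|d|$-indexed family with $(y\sigma)_i=y_i\sigma_i^\varphi$.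
   Context: Operadic categories: $\mathcal S$ is a skeleton of finite sets, with fixed equivalences $R_I:\mathcal S/I\to\mathcal S^I$ sending $f:J\to I$ to its fibres. An operadic category is a category $\mathcal C$ with a functor $|\cdot|:\mathcal C\to\mathcal S$ and functors $R_c:\mathcal C/c\to\mathcal C^{|c|}$ with $|\cdot|^{|c|}\circ R_c=R_{|c|}\circ(|\cdot|/c)$; the fibre $\psi^{-1}i$ of $\psi:c\to d$ at $i\in|d|$ is the $i$-th component of $R_d(\psi)$; for $\varphi:b\to c,\psi:c\to d$, $\varphi^\psi=R_d(\varphi:\psi\varphi\to\psi)$ with components $\varphi^\psi_j:(\psi\varphi)^{-1}j\to\psi^{-1}j$; $u$ is trivial if $|u|=1$ and $R_u=\mathrm{dom}$. Axioms: fibres of identities are trivial; double slice condition: for $\psi:c\to d$, $R_c\circ(\mathrm{dom}/\psi)=(\cong)\circ(\prod_jR_{\psi^{-1}j})\circ(R_d/\psi)$ as functors $(\mathcal C/d)/\psi\to\mathcal C^{|c|}$, via $\mathcal C^{|d|}/R_d\psi\cong\prod_j\mathcal C/\psi^{-1}j$ and $|c|\cong\sum_j|\psi|^{-1}j$. A morphism is fibrewise trivial if all its fibres are trivial; these form a wide subcategory $\mathbb C$ of $\mathcal C$. $\mathrm{Coll}_{\mathcal C}$ is the skew monoidal category with underlying category $\mathbf{Set}/C$ ($C$ = object set; objects $\partial:X\to C$, $X_c=\partial^{-1}c$), tensor $(X*Y)_c=\sum_{\varphi:c\to d}X_d\times\prod_{i\in|d|}Y_{\varphi^{-1}i}$ (elements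 $(x,\varphi,y)$), unit $U$ the set of trivial objects, maps $\alpha(x,\psi,y,\varphi,z)=(x,\psi\varphi,y,\varphi^\psi,z)$, $\lambda(u,\varphi,x)=x$, $\rho(x)=(x,1_{\partial x},(1_{\partial x}^{-1}i)_i)$. A right $U$-module is $X$ with $r:X*U\to X$ such that $r(r*1)=r(1*\lambda)\alpha$ and $r\rho=1$. An element of $(X*U)_c$ amounts to a morphism $\pi:c\to d$ in $\mathbb C$ and $x\in X_d$; thus a right $U$-module is the same as a presheaf on $\mathbb C$, writing $x\pi\in X_c$ for the action. $\mathrm{Coll}_{\mathcal C}^U$ is the category of right $U$-modules with the following skew monoidal structure: $X\wedge Y$ is the coequalizer $p:X*Y\to X\wedge Y$ of the two maps $r_X*1$ and $(1*\lambda)\circ\alpha$ from $(X*U)*Y$ to $X*Y$, with action $r:(X\wedge Y)*U\to X\wedge Y$ determined by $r\circ(p*1)=p\circ(1*r_Y)\circ\alpha$; the unit is $U$; the structure maps are induced from those of $\mathrm{Coll}_{\mathcal C}$ via the quotient maps. $[x,\varphi,y]$ denotes the class of $(x,\varphi,y)$. *)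

theory Defs
  imports Main "HOL-Library.FuncSet"
begin

text \<open>The skeleton S of finite sets: objects are natural numbers n (standing for
{0..<n}); a morphism m -> n is a function nat => nat, considered on {..<m}.
The fixed equivalence R_I sends f : m -> n to its fibres, each fibre
{k<m. f k = i} being identified with {0..<card} in increasing order.\<close>

definition sfib :: "(nat \<Rightarrow> nat) \<Rightarrow> nat \<Rightarrow> nat \<Rightarrow> nat set" where
  "sfib f m i = {k. k < m \<and> f k = i}"

definition spos :: "nat \<Rightarrow> nat set \<Rightarrow> nat" where
  "spos a A = card {b \<in> A. b < a}"

definition senum :: "nat set \<Rightarrow> nat \<Rightarrow> nat" where
  "senum A l = sorted_list_of_set A ! l"

text \<open>Data of a category C equipped with a cardinality functor to S and fibre
functors: cFib C psi i is the fibre psi^{-1} i, and cFibm C phi psi j is phi^psi_j.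
cComp C g f is the composite g o f.\<close>

record ('o, 'm) opcat =
  cOb :: "'o set"
  cMor :: "'m set"
  cDom :: "'m \<Rightarrow> 'o"
  cCod :: "'m \<Rightarrow> 'o"
  cComp :: "'m \<Rightarrow> 'm \<Rightarrow> 'm"
  cId :: "'o \<Rightarrow> 'm"
  cCard :: "'o \<Rightarrow> nat"
  cCardm :: "'m \<Rightarrow> nat \<Rightarrow> nat"
  cFib :: "'m \<Rightarrow> nat \<Rightarrow> 'o"
  cFibm :: "'m \<Rightarrow> 'm \<Rightarrow> nat \<Rightarrow> 'm"

definition is_category :: "('o, 'm) opcat \<Rightarrow> bool" where
  "is_category C \<longleftrightarrow>
    (\<forall>f \<in> cMor C. cDom C f \<in> cOb C \<and> cCod C f \<in> cOb C) \<and>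
    (\<forall>c \<in> cOb C. cId C c \<in> cMor C \<and> cDom C (cId C c) = c \<and> cCod C (cId C c) = c) \<and>
    (\<forall>f \<in> cMor C. \<forall>g \<in> cMor C. cCod C f = cDom C g \<longrightarrow>
        cComp C g f \<in> cMor C \<and> cDom C (cComp C g f) = cDom C f \<and> cCod C (cComp C g f) = cCod C g) \<and>
    (\<forall>f \<in> cMor C. cComp C (cId C (cCod C f)) f = f \<and> cComp C f (cId C (cDom C f)) = f) \<and>
    (\<forall>f \<in> cMor C. \<forall>g \<in> cMor C. \<forall>h \<in> cMor C. cCod C f = cDom C g \<and> cCod C g = cDom C h \<longrightarrow>
        cComp C h (cComp C g f) = cComp C (cComp C h g) f)"

definition card_functor :: "('o, 'm) opcat \<Rightarrow> bool" where
  "card_functor C \<longleftrightarrow>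
    (\<forall>f \<in> cMor C. \<forall>i < cCard C (cDom C f). cCardm C f i < cCard C (cCod C f)) \<and>
    (\<forall>c \<in> cOb C. \<forall>i < cCard C c. cCardm C (cId C c) i = i) \<and>
    (\<forall>f \<in> cMor C. \<forall>g \<in> cMor C. cCod C f = cDom C g \<longrightarrow>
        (\<forall>i < cCard C (cDom C f). cCardm C (cComp C g f) i = cCardm C g (cCardm C f i)))"

text \<open>R_d : C/d -> C^{|d|} is a functor, and |.|^{|c|} o R_c = R_{|c|} o (|.|/c)\<close>
definition fibre_functors :: "('o, 'm) opcat \<Rightarrow> bool" where
  "fibre_functors C \<longleftrightarrow>
    (\<forall>psi \<in> cMor C. \<forall>i < cCard C (cCod C psi). cFib C psi i \<in> cOb C) \<and>
    (\<forall>phi \<in> cMor C. \<forall>psi \<in> cMor C. cCod C phi = cDom C psi \<longrightarrow>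
       (\<forall>i < cCard C (cCod C psi).
          cFibm C phi psi i \<in> cMor C \<and>
          cDom C (cFibm C phi psi i) = cFib C (cComp C psi phi) i \<and>
          cCod C (cFibm C phi psi i) = cFib C psi i)) \<and>
    (\<forall>psi \<in> cMor C. \<forall>i < cCard C (cCod C psi).
        cFibm C (cId C (cDom C psi)) psi i = cId C (cFib C psi i)) \<and>
    (\<forall>chi \<in> cMor C. \<forall>phi \<in> cMor C. \<forall>psi \<in> cMor C.
        cCod C chi = cDom C phi \<and> cCod C phi = cDom C psi \<longrightarrow>
       (\<forall>i < cCard C (cCod C psi).
          cFibm C (cComp C phi chi) psi i
            = cComp C (cFibm C phi psi i) (cFibm C chi (cComp C psi phi) i))) \<and>
    (\<forall>psi \<in> cMor C. \<forall>i < cCard C (cCod C psi).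
        cCard C (cFib C psi i) = card (sfib (cCardm C psi) (cCard C (cDom C psi)) i)) \<and>
    (\<forall>phi \<in> cMor C. \<forall>psi \<in> cMor C. cCod C phi = cDom C psi \<longrightarrow>
       (\<forall>i < cCard C (cCod C psi). \<forall>l < cCard C (cFib C (cComp C psi phi) i).
          cCardm C (cFibm C phi psi i) l
            = spos (cCardm C phi (senum (sfib (cCardm C (cComp C psi phi)) (cCard C (cDom C phi)) i) l))
                   (sfib (cCardm C psi) (cCard C (cDom C psi)) i)))"

definition triv :: "('o, 'm) opcat \<Rightarrow> 'o \<Rightarrow> bool" where
  "triv C u \<longleftrightarrow> u \<in> cOb C \<and> cCard C u = 1 \<and>
    (\<forall>psi \<in> cMor C. cCod C psi = u \<longrightarrow> cFib C psi 0 = cDom C psi) \<and>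
    (\<forall>phi \<in> cMor C. \<forall>psi \<in> cMor C. cCod C phi = cDom C psi \<and> cCod C psi = u \<longrightarrow>
        cFibm C phi psi 0 = phi)"

definition operadic :: "('o, 'm) opcat \<Rightarrow> bool" where
  "operadic C \<longleftrightarrow> is_category C \<and> card_functor C \<and> fibre_functors C \<and>
    \<comment> \<open>fibres of identities are trivial\<close>
    (\<forall>c \<in> cOb C. \<forall>i < cCard C c. triv C (cFib C (cId C c) i)) \<and>
    \<comment> \<open>double slice condition, via |c| = Sum_j |psi|^{-1} j, k <-> (|psi| k, position of k)\<close>
    (\<forall>phi \<in> cMor C. \<forall>psi \<in> cMor C. cCod C phi = cDom C psi \<longrightarrow>
      (\<forall>k < cCard C (cDom C psi).
        let j = cCardm C psi k;
            l = spos k (sfib (cCardm C psi) (cCard C (cDom C psi)) j)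
        in cFib C phi k = cFib C (cFibm C phi psi j) l \<and>
           (\<forall>chi \<in> cMor C. cCod C chi = cDom C phi \<longrightarrow>
              cFibm C chi phi k = cFibm C (cFibm C chi (cComp C psi phi) j) (cFibm C phi psi j) l)))"

text \<open>fibrewise trivial morphisms (the wide subcategory \<bbbC>)\<close>
definition fwt :: "('o, 'm) opcat \<Rightarrow> 'm \<Rightarrow> bool" where
  "fwt C f \<longleftrightarrow> f \<in> cMor C \<and> (\<forall>i < cCard C (cCod C f). triv C (cFib C f i))"

section \<open>Collections: objects of Set/C are pairs (X, dX) with dX : X -> Ob C\<close>

definition tens :: "('o, 'm) opcat \<Rightarrow> 'a set \<Rightarrow> ('a \<Rightarrow> 'o) \<Rightarrow> 'b set \<Rightarrow> ('b \<Rightarrow> 'o)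
    \<Rightarrow> ('a \<times> 'm \<times> (nat \<Rightarrow> 'b)) set" where
  "tens C X dX Y dY = {(x, phi, y). phi \<in> cMor C \<and> x \<in> X \<and> dX x = cCod C phi \<and>
      y \<in> (\<Pi>\<^sub>E i \<in> {..<cCard C (cCod C phi)}. {v \<in> Y. dY v = cFib C phi i})}"

definition tdom :: "('o, 'm) opcat \<Rightarrow> ('a \<times> 'm \<times> 'c) \<Rightarrow> 'o" where
  "tdom C a = cDom C (fst (snd a))"

definition Uset :: "('o, 'm) opcat \<Rightarrow> 'o set" where
  "Uset C = {u \<in> cOb C. triv C u}"

definition assoc :: "('o, 'm) opcat \<Rightarrow> (('a \<times> 'm \<times> (nat \<Rightarrow> 'b)) \<times> 'm \<times> (nat \<Rightarrow> 'c))
    \<Rightarrow> ('a \<times> 'm \<times> (nat \<Rightarrow> ('b \<times> 'm \<times> (nat \<Rightarrow> 'c))))" where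
  "assoc C a = (case a of ((x, psi, y), phi, z) \<Rightarrow>
     (x, cComp C psi phi,
      restrict (\<lambda>j. (y j, cFibm C phi psi j,
          restrict (\<lambda>l. z (senum (sfib (cCardm C psi) (cCard C (cDom C psi)) j) l))
                   {..<cCard C (cFib C psi j)}))
        {..<cCard C (cCod C psi)}))"

text \<open>f * 1 and 1 * g\<close>
definition lft :: "('a \<Rightarrow> 'b) \<Rightarrow> ('a \<times> 'm \<times> 'c) \<Rightarrow> ('b \<times> 'm \<times> 'c)" where
  "lft f a = (case a of (w, phi, y) \<Rightarrow> (f w, phi, y))"

definition rgt :: "('o, 'm) opcat \<Rightarrow> ('b \<Rightarrow> 'c) \<Rightarrow> ('a \<times> 'm \<times> (nat \<Rightarrow> 'b))
    \<Rightarrow> ('a \<times> 'm \<times> (nat \<Rightarrow> 'c))" where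
  "rgt C g a = (case a of (x, phi, w) \<Rightarrow> (x, phi, restrict (\<lambda>i. g (w i)) {..<cCard C (cCod C phi)}))"

definition lam :: "('o \<times> 'm \<times> (nat \<Rightarrow> 'b)) \<Rightarrow> 'b" where
  "lam a = snd (snd a) 0"

definition rho :: "('o, 'm) opcat \<Rightarrow> ('a \<Rightarrow> 'o) \<Rightarrow> 'a \<Rightarrow> ('a \<times> 'm \<times> (nat \<Rightarrow> 'o))" where
  "rho C d x = (x, cId C (d x), restrict (\<lambda>i. cFib C (cId C (d x)) i) {..<cCard C (d x)})"

definition rmod :: "('o, 'm) opcat \<Rightarrow> 'a set \<Rightarrow> ('a \<Rightarrow> 'o) \<Rightarrow> (('a \<times> 'm \<times> (nat \<Rightarrow> 'o)) \<Rightarrow> 'a) \<Rightarrow> bool" where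
  "rmod C X d r \<longleftrightarrow>
    (\<forall>x \<in> X. d x \<in> cOb C) \<and>
    (\<forall>a \<in> tens C X d (Uset C) id. r a \<in> X \<and> d (r a) = tdom C a) \<and>
    (\<forall>b \<in> tens C (tens C X d (Uset C) id) (tdom C) (Uset C) id.
        r (lft r b) = r (rgt C lam (assoc C b))) \<and>
    (\<forall>x \<in> X. r (rho C d x) = x)"

definition fibfam :: "('o, 'm) opcat \<Rightarrow> 'm \<Rightarrow> nat \<Rightarrow> 'o" where
  "fibfam C p = restrict (\<lambda>i. cFib C p i) {..<cCard C (cCod C p)}"

definition genEq :: "'a set \<Rightarrow> ('a \<times> 'a) set \<Rightarrow> ('a \<times> 'a) set" where
  "genEq A R = Id_on A \<union> (R \<union> R\<inverse>)\<^sup>+"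

text \<open>the pairs identified by the coequalizer of r_X * 1 and (1 * lambda) o alpha\<close>
definition coeq_pairs :: "('o, 'm) opcat \<Rightarrow> 'x set \<Rightarrow> ('x \<Rightarrow> 'o) \<Rightarrow> (('x \<times> 'm \<times> (nat \<Rightarrow> 'o)) \<Rightarrow> 'x)
    \<Rightarrow> 'y set \<Rightarrow> ('y \<Rightarrow> 'o) \<Rightarrow> (('x \<times> 'm \<times> (nat \<Rightarrow> 'y)) \<times> ('x \<times> 'm \<times> (nat \<Rightarrow> 'y))) set" where
  "coeq_pairs C X dX rX Y dY =
     {(lft rX b, rgt C lam (assoc C b)) | b. b \<in> tens C (tens C X dX (Uset C) id) (tdom C) Y dY}"

text \<open>the kernel of the quotient map p : X * Y -> X wedge Y (coequalizer in Set/C)\<close>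
definition wedge_rel :: "('o, 'm) opcat \<Rightarrow> 'x set \<Rightarrow> ('x \<Rightarrow> 'o) \<Rightarrow> (('x \<times> 'm \<times> (nat \<Rightarrow> 'o)) \<Rightarrow> 'x)
    \<Rightarrow> 'y set \<Rightarrow> ('y \<Rightarrow> 'o) \<Rightarrow> (('x \<times> 'm \<times> (nat \<Rightarrow> 'y)) \<times> ('x \<times> 'm \<times> (nat \<Rightarrow> 'y))) set" where
  "wedge_rel C X dX rX Y dY = genEq (tens C X dX Y dY) (coeq_pairs C X dX rX Y dY)"

text \<open>the quotient map p, [x, phi, y] = p (x, phi, y)\<close>
definition wcls :: "('o, 'm) opcat \<Rightarrow> 'x set \<Rightarrow> ('x \<Rightarrow> 'o) \<Rightarrow> (('x \<times> 'm \<times> (nat \<Rightarrow> 'o)) \<Rightarrow> 'x)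
    \<Rightarrow> 'y set \<Rightarrow> ('y \<Rightarrow> 'o) \<Rightarrow> ('x \<times> 'm \<times> (nat \<Rightarrow> 'y)) \<Rightarrow> ('x \<times> 'm \<times> (nat \<Rightarrow> 'y)) set" where
  "wcls C X dX rX Y dY a = wedge_rel C X dX rX Y dY `` {a}"

text \<open>the explicit generating relation (x, pi phi, y) ~ (x pi, phi, y_pi)\<close>
definition expl_pairs :: "('o, 'm) opcat \<Rightarrow> 'x set \<Rightarrow> ('x \<Rightarrow> 'o) \<Rightarrow> (('x \<times> 'm \<times> (nat \<Rightarrow> 'o)) \<Rightarrow> 'x)
    \<Rightarrow> 'y set \<Rightarrow> ('y \<Rightarrow> 'o) \<Rightarrow> (('x \<times> 'm \<times> (nat \<Rightarrow> 'y)) \<times> ('x \<times> 'm \<times> (nat \<Rightarrow> 'y))) set" where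
  "expl_pairs C X dX rX Y dY =
     {((x, cComp C p phi, y),
       (rX (x, p, fibfam C p), phi, restrict (\<lambda>i'. y (cCardm C p i')) {..<cCard C (cDom C p)}))
      | x p phi y. phi \<in> cMor C \<and> fwt C p \<and> cCod C phi = cDom C p \<and> x \<in> X \<and> dX x = cCod C p \<and>
          y \<in> (\<Pi>\<^sub>E i \<in> {..<cCard C (cCod C p)}. {v \<in> Y. dY v = cFib C (cComp C p phi) i})}"

end

theory Submission
  imports Defs
begin

text \<open>
  Elements of \<open>X * U\<close> are pairs \<open>(x, \<pi>)\<close> with \<open>\<pi>\<close> fibrewise trivial, because the
  \<open>U\<close>-family over \<open>\<pi>\<close> is forced to be the family of its fibres. For such \<open>\<pi>\<close> the map \<open>|\<pi>|\<close>
  has singleton fibres, so reindexing along \<open>|\<pi>|\<close> is a bijection between families over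
  \<open>\<pi>\<varphi>\<close> and over \<open>\<varphi>\<close>; this turns the coequalizer pairs
  \<open>((x, \<pi>, fibres \<pi>), \<varphi>, z)\<close> into the explicit pairs \<open>(x, \<pi>\<varphi>, y) \<sim> (x\<pi>, \<varphi>, y\<^sub>\<pi>)\<close>.
  The action \<open>(x, \<varphi>, y)\<sigma> = (x, \<varphi>\<sigma>, y\<sigma>)\<close> on \<open>X * Y\<close> maps explicit pairs to explicit
  pairs (by the double slice condition for the fibres of \<open>\<pi>\<varphi>\<sigma>\<close>), hence descends to the quotient.
\<close>

lemma senum_mem: "finite A \<Longrightarrow> l < card A \<Longrightarrow> senum A l \<in> A"
  unfolding senum_def by (metis length_sorted_list_of_set nth_mem set_sorted_list_of_set)

lemma spos_senum:
  assumes "finite A" "l < card A"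
  shows "spos (senum A l) A = l"
proof -
  define xs where "xs = sorted_list_of_set A"
  have len: "length xs = card A" unfolding xs_def by simp
  have sorted: "sorted_wrt (<) xs" unfolding xs_def by (rule strict_sorted_list_of_set)
  have set: "set xs = A" unfolding xs_def using assms by simp
  have below: "{b \<in> A. b < xs ! l} = (\<lambda>i. xs ! i) ` {..<l}"
  proof
    show "{b \<in> A. b < xs ! l} \<subseteq> (\<lambda>i. xs ! i) ` {..<l}"
    proof
      fix b assume b: "b \<in> {b \<in> A. b < xs ! l}"
      then obtain i where i: "i < length xs" "b = xs ! i" using set by (auto simp: in_set_conv_nth)
      have "i < l"
      proof (rule ccontr)
        assume "\<not> i < l"
        then have "xs ! l \<le> xs ! i" using sorted i
          by (metis le_eq_less_or_eq linorder_not_less order.strict_implies_order sorted_wrt_nth_less)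
        then show False using b i by simp
      qed
      then show "b \<in> (\<lambda>i. xs ! i) ` {..<l}" using i by auto
    qed
    show "(\<lambda>i. xs ! i) ` {..<l} \<subseteq> {b \<in> A. b < xs ! l}"
      using sorted assms len set by (auto intro: sorted_wrt_nth_less)
  qed
  have "inj_on (\<lambda>i. xs ! i) {..<l}"
    using assms len by (auto simp: inj_on_def nth_eq_iff_index_eq xs_def)
  then have "card {b \<in> A. b < xs ! l} = l" using below card_image by fastforce
  then show ?thesis unfolding senum_def spos_def xs_def .
qed

lemma finite_sfib: "finite (sfib f m i)"
  unfolding sfib_def by simp

lemma senum_singleton [simp]: "senum {k} 0 = k"
  unfolding senum_def by simp

lemma spos_singleton [simp]: "spos k {k} = 0"
  unfolding spos_def by simp

lemma genEq_refl: "a \<in> A \<Longrightarrow> (a, a) \<in> genEq A R"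
  unfolding genEq_def by auto

lemma genEq_sym: "(a, b) \<in> genEq A R \<Longrightarrow> (b, a) \<in> genEq A R"
proof -
  have "sym ((R \<union> R\<inverse>)\<^sup>+)" by (rule sym_trancl) (simp add: sym_Un_converse)
  then show "(a, b) \<in> genEq A R \<Longrightarrow> (b, a) \<in> genEq A R"
    unfolding genEq_def by (auto dest: symD)
qed

lemma genEq_trans: "(a, b) \<in> genEq A R \<Longrightarrow> (b, c) \<in> genEq A R \<Longrightarrow> (a, c) \<in> genEq A R"
  unfolding genEq_def by (auto intro: trancl_trans)

lemma genEq_Image_eq: "(a, b) \<in> genEq A R \<Longrightarrow> genEq A R `` {a} = genEq A R `` {b}"
  using genEq_sym genEq_trans by fast

lemma genEq_converse: "genEq A (R\<inverse>) = genEq A R"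
  unfolding genEq_def by (simp add: Un_commute)

lemma genEq_map:
  assumes closed: "\<And>a. a \<in> A \<Longrightarrow> P a \<Longrightarrow> f a \<in> A"
    and invariant: "\<And>a b. (a, b) \<in> R \<Longrightarrow> P b \<longleftrightarrow> P a"
    and step: "\<And>a b. (a, b) \<in> R \<Longrightarrow> P a \<Longrightarrow> (f a, f b) \<in> R"
    and ab: "(a, b) \<in> genEq A R" and "P a"
  shows "(f a, f b) \<in> genEq A R"
proof -
  have sym_step: "(f a, f b) \<in> R \<union> R\<inverse> \<and> P b" if "(a, b) \<in> R \<union> R\<inverse>" "P a" for a b
    using that invariant step by blast
  have "(f a, f b) \<in> (R \<union> R\<inverse>)\<^sup>+ \<and> P b" if "(a, b) \<in> (R \<union> R\<inverse>)\<^sup>+" "P a" for a b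
    using that(1)
  proof (induction rule: trancl_induct)
    case (base b)
    then show ?case using sym_step \<open>P a\<close> by blast
  next
    case (step b c)
    then show ?case using sym_step by (meson trancl.trancl_into_trancl)
  qed
  then show ?thesis using ab \<open>P a\<close> closed unfolding genEq_def by blast
qed

lemma mem_tens:
  "(x, phi, y) \<in> tens C X dX Y dY \<longleftrightarrow> phi \<in> cMor C \<and> x \<in> X \<and> dX x = cCod C phi \<and>
     y \<in> (\<Pi>\<^sub>E i \<in> {..<cCard C (cCod C phi)}. {v \<in> Y. dY v = cFib C phi i})"
  by (simp add: tens_def)

lemma rmod_closed:
  "rmod C Y dY rY \<Longrightarrow> a \<in> tens C Y dY (Uset C) id \<Longrightarrow> rY a \<in> Y \<and> dY (rY a) = tdom C a"
  unfolding rmod_def by blast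

locale operadic_category =
  fixes C :: "('o, 'm) opcat"
  assumes operadic: "operadic C"
begin

abbreviation "M \<equiv> cMor C"
abbreviation "dm \<equiv> cDom C"
abbreviation "cd \<equiv> cCod C"
abbreviation "cp \<equiv> cComp C"
abbreviation "crd \<equiv> cCard C"
abbreviation "crdm \<equiv> cCardm C"
abbreviation "fib \<equiv> cFib C"
abbreviation "fibm \<equiv> cFibm C"

abbreviation Sfib :: "'m \<Rightarrow> nat \<Rightarrow> nat set" where
  "Sfib p j \<equiv> sfib (crdm p) (crd (dm p)) j"

abbreviation fams :: "'y set \<Rightarrow> ('y \<Rightarrow> 'o) \<Rightarrow> 'm \<Rightarrow> (nat \<Rightarrow> 'y) set" where
  "fams Y dY phi \<equiv> \<Pi>\<^sub>E i \<in> {..<crd (cd phi)}. {v \<in> Y. dY v = fib phi i}"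

lemma category: "is_category C"
  and card_functor: "card_functor C"
  and fibre_functors: "fibre_functors C"
  using operadic unfolding operadic_def by auto

lemma id_mor: "c \<in> cOb C \<Longrightarrow> cId C c \<in> M \<and> dm (cId C c) = c \<and> cd (cId C c) = c"
  using category unfolding is_category_def by auto

lemma comp_mor: "f \<in> M \<Longrightarrow> g \<in> M \<Longrightarrow> cd f = dm g \<Longrightarrow> cp g f \<in> M"
  and dom_comp: "f \<in> M \<Longrightarrow> g \<in> M \<Longrightarrow> cd f = dm g \<Longrightarrow> dm (cp g f) = dm f"
  and cod_comp: "f \<in> M \<Longrightarrow> g \<in> M \<Longrightarrow> cd f = dm g \<Longrightarrow> cd (cp g f) = cd g"
  using category unfolding is_category_def by auto

lemma comp_assoc: "f \<in> M \<Longrightarrow> g \<in> M \<Longrightarrow> h \<in> M \<Longrightarrow> cd f = dm g \<Longrightarrow> cd g = dm h \<Longrightarrow>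
   cp h (cp g f) = cp (cp h g) f"
  using category unfolding is_category_def by auto

lemma crdm_less: "f \<in> M \<Longrightarrow> i < crd (dm f) \<Longrightarrow> crdm f i < crd (cd f)"
  using card_functor unfolding card_functor_def by auto

lemma fibm_mor: "phi \<in> M \<Longrightarrow> psi \<in> M \<Longrightarrow> cd phi = dm psi \<Longrightarrow> i < crd (cd psi) \<Longrightarrow>
   fibm phi psi i \<in> M \<and> dm (fibm phi psi i) = fib (cp psi phi) i \<and> cd (fibm phi psi i) = fib psi i"
  using fibre_functors unfolding fibre_functors_def by blast

lemma crd_fib: "psi \<in> M \<Longrightarrow> i < crd (cd psi) \<Longrightarrow> crd (fib psi i) = card (Sfib psi i)"
  using fibre_functors unfolding fibre_functors_def by blast

lemma double_slice_fib: "phi \<in> M \<Longrightarrow> psi \<in> M \<Longrightarrow> cd phi = dm psi \<Longrightarrow> k < crd (dm psi) \<Longrightarrow>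
   fib phi k = fib (fibm phi psi (crdm psi k)) (spos k (Sfib psi (crdm psi k)))"
  using operadic unfolding operadic_def Let_def by blast

lemma double_slice_fibm: "phi \<in> M \<Longrightarrow> psi \<in> M \<Longrightarrow> cd phi = dm psi \<Longrightarrow> k < crd (dm psi) \<Longrightarrow>
   chi \<in> M \<Longrightarrow> cd chi = dm phi \<Longrightarrow>
   fibm chi phi k = fibm (fibm chi (cp psi phi) (crdm psi k)) (fibm phi psi (crdm psi k))
      (spos k (Sfib psi (crdm psi k)))"
  using operadic unfolding operadic_def Let_def by blast

lemma triv_card: "triv C u \<Longrightarrow> crd u = 1"
  and triv_ob: "triv C u \<Longrightarrow> u \<in> cOb C"
  and triv_fib: "triv C u \<Longrightarrow> psi \<in> M \<Longrightarrow> cd psi = u \<Longrightarrow> fib psi 0 = dm psi"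
  and triv_fibm: "triv C u \<Longrightarrow> phi \<in> M \<Longrightarrow> psi \<in> M \<Longrightarrow> cd phi = dm psi \<Longrightarrow> cd psi = u \<Longrightarrow>
     fibm phi psi 0 = phi"
  unfolding triv_def by auto

lemma Uset_iff: "u \<in> Uset C \<longleftrightarrow> triv C u"
  unfolding Uset_def using triv_ob by auto

lemma fwt_mor: "fwt C p \<Longrightarrow> p \<in> M"
  unfolding fwt_def by auto

lemma fwt_Sfib_singleton:
  assumes "fwt C p" "j < crd (cd p)"
  obtains k where "Sfib p j = {k}"
proof -
  have "crd (fib p j) = 1" using assms triv_card unfolding fwt_def by auto
  then have "card (Sfib p j) = 1" using crd_fib assms fwt_mor by auto
  then show ?thesis using that by (auto simp: card_1_singleton_iff)
qed

lemma fwt_Sfib_eq: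
  assumes p: "fwt C p" and k: "k < crd (dm p)"
  shows "Sfib p (crdm p k) = {k}"
proof -
  obtain k' where k': "Sfib p (crdm p k) = {k'}"
    using fwt_Sfib_singleton[OF p crdm_less[OF fwt_mor[OF p] k]] .
  have "k \<in> Sfib p (crdm p k)" using k unfolding sfib_def by auto
  then show ?thesis using k' by auto
qed

lemma fwt_senum_Sfib:
  assumes "fwt C p" "j < crd (cd p)"
  shows "senum (Sfib p j) 0 < crd (dm p)" and "crdm p (senum (Sfib p j) 0) = j"
proof -
  obtain k where k: "Sfib p j = {k}" using fwt_Sfib_singleton[OF assms] .
  then have "k < crd (dm p)" "crdm p k = j" by (auto simp: sfib_def)
  then show "senum (Sfib p j) 0 < crd (dm p)" "crdm p (senum (Sfib p j) 0) = j"
    unfolding k by simp_all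
qed

text \<open>The double slice condition read through the enumeration of the fibres of \<open>|\<varphi>|\<close>.\<close>

lemma fib_senum_Sfib:
  assumes s: "s \<in> M" and phi: "phi \<in> M" and c: "cd s = dm phi"
    and j: "j < crd (cd phi)" and l: "l < crd (fib phi j)"
  shows "senum (Sfib phi j) l < crd (dm phi)"
    and "fib s (senum (Sfib phi j) l) = fib (fibm s phi j) l"
proof -
  have l': "l < card (Sfib phi j)" using l crd_fib[OF phi j] by simp
  have "senum (Sfib phi j) l \<in> Sfib phi j" using senum_mem[OF finite_sfib l'] .
  then show k: "senum (Sfib phi j) l < crd (dm phi)" by (simp add: sfib_def)
  have kj: "crdm phi (senum (Sfib phi j) l) = j"
    using \<open>senum (Sfib phi j) l \<in> Sfib phi j\<close> by (simp add: sfib_def)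
  show "fib s (senum (Sfib phi j) l) = fib (fibm s phi j) l"
    using double_slice_fib[OF s phi c k] spos_senum[OF finite_sfib l'] kj by simp
qed

lemma fwt_fibm:
  assumes s: "fwt C s" and phi: "phi \<in> M" and c: "cd s = dm phi" and j: "j < crd (cd phi)"
  shows "fwt C (fibm s phi j)"
proof -
  have fm: "fibm s phi j \<in> M" "cd (fibm s phi j) = fib phi j"
    using fibm_mor[OF fwt_mor[OF s] phi c j] by auto
  have "triv C (fib (fibm s phi j) l)" if l: "l < crd (fib phi j)" for l
    using fib_senum_Sfib[OF fwt_mor[OF s] phi c j l] s c unfolding fwt_def by metis
  then show ?thesis using fm unfolding fwt_def by auto
qed

lemma fibfam_fibm:
  assumes s: "fwt C s" and phi: "phi \<in> M" and c: "cd s = dm phi" and j: "j < crd (cd phi)"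
  shows "restrict (\<lambda>l. fibfam C s (senum (Sfib phi j) l)) {..<crd (fib phi j)}
           = fibfam C (fibm s phi j)"
  using fib_senum_Sfib[OF fwt_mor[OF s] phi c j] fibm_mor[OF fwt_mor[OF s] phi c j] c
  unfolding fibfam_def by (auto intro: restrict_ext)

lemma fib_comp_fwt:
  assumes p: "fwt C p" and phi: "phi \<in> M" and c: "cd phi = dm p" and k: "k < crd (dm p)"
  shows "fib (cp p phi) (crdm p k) = fib phi k"
proof -
  have j: "crdm p k < crd (cd p)" using crdm_less[OF fwt_mor[OF p] k] .
  have triv: "triv C (fib p (crdm p k))" using p j unfolding fwt_def by auto
  have fm: "fibm phi p (crdm p k) \<in> M" "dm (fibm phi p (crdm p k)) = fib (cp p phi) (crdm p k)"
    "cd (fibm phi p (crdm p k)) = fib p (crdm p k)"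
    using fibm_mor[OF phi fwt_mor[OF p] c j] by auto
  have "fib phi k = fib (fibm phi p (crdm p k)) 0"
    using double_slice_fib[OF phi fwt_mor[OF p] c k] fwt_Sfib_eq[OF p k] by simp
  also have "\<dots> = fib (cp p phi) (crdm p k)" using triv_fib[OF triv fm(1) fm(3)] fm(2) by simp
  finally show ?thesis by simp
qed

lemma fibm_comp_fwt:
  assumes p: "fwt C p" and phi: "phi \<in> M" and c: "cd phi = dm p" and k: "k < crd (dm p)"
    and s: "s \<in> M" and cs: "cd s = dm phi"
  shows "fibm s (cp p phi) (crdm p k) = fibm s phi k"
proof -
  have pm: "p \<in> M" using fwt_mor[OF p] .
  have j: "crdm p k < crd (cd p)" using crdm_less[OF pm k] .
  have triv: "triv C (fib p (crdm p k))" using p j unfolding fwt_def by auto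
  have f1: "fibm phi p (crdm p k) \<in> M" "cd (fibm phi p (crdm p k)) = fib p (crdm p k)"
    "dm (fibm phi p (crdm p k)) = fib (cp p phi) (crdm p k)"
    using fibm_mor[OF phi pm c j] by auto
  have f2: "fibm s (cp p phi) (crdm p k) \<in> M"
    "cd (fibm s (cp p phi) (crdm p k)) = fib (cp p phi) (crdm p k)"
    using fibm_mor[OF s comp_mor[OF phi pm c]] j cs dom_comp[OF phi pm c] cod_comp[OF phi pm c]
    by auto
  have "fibm s phi k = fibm (fibm s (cp p phi) (crdm p k)) (fibm phi p (crdm p k)) 0"
    using double_slice_fibm[OF phi pm c k s cs] fwt_Sfib_eq[OF p k] by simp
  also have "\<dots> = fibm s (cp p phi) (crdm p k)"
    using triv_fibm[OF triv f2(1) f1(1)] f1 f2 by simp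
  finally show ?thesis by simp
qed

lemma fibfam_mem_fams: "fwt C p \<Longrightarrow> fibfam C p \<in> fams (Uset C) id p"
  by (simp add: fibfam_def fwt_def Uset_iff)

lemma fams_Uset_iff:
  assumes "p \<in> M"
  shows "u \<in> fams (Uset C) id p \<longleftrightarrow> fwt C p \<and> u = fibfam C p"
proof
  assume u: "u \<in> fams (Uset C) id p"
  have u_fib: "u i \<in> Uset C" "u i = fib p i" if "i < crd (cd p)" for i
    using PiE_mem[OF u, of i] that by auto
  then have "fwt C p" using assms Uset_iff unfolding fwt_def by metis
  moreover have "u = fibfam C p"
    using PiE_ext[OF u fibfam_mem_fams[OF \<open>fwt C p\<close>]] u_fib by (simp add: fibfam_def)
  ultimately show "fwt C p \<and> u = fibfam C p" ..
qed (use fibfam_mem_fams in blast)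

lemma mem_tens_Uset:
  "(x, p, u) \<in> tens C X dX (Uset C) id \<longleftrightarrow> x \<in> X \<and> dX x = cd p \<and> fwt C p \<and> u = fibfam C p"
proof -
  have "p \<in> M \<and> u \<in> fams (Uset C) id p \<longleftrightarrow> fwt C p \<and> u = fibfam C p"
    using fams_Uset_iff fwt_mor by blast
  then show ?thesis unfolding mem_tens by blast
qed

text \<open>\<open>pull_fam p y\<close> is the paper's \<open>y\<^sub>\<pi>\<close>; when \<open>p\<close> is fibrewise trivial, \<open>|p|\<close> is a
  bijection and \<open>push_fam p\<close> reindexes along its inverse.\<close>

definition pull_fam :: "'m \<Rightarrow> (nat \<Rightarrow> 'y) \<Rightarrow> nat \<Rightarrow> 'y" where
  "pull_fam p y = restrict (\<lambda>i. y (crdm p i)) {..<crd (dm p)}"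

definition push_fam :: "'m \<Rightarrow> (nat \<Rightarrow> 'y) \<Rightarrow> nat \<Rightarrow> 'y" where
  "push_fam p z = restrict (\<lambda>j. z (senum (Sfib p j) 0)) {..<crd (cd p)}"

lemma pull_fam_mem:
  assumes p: "fwt C p" and phi: "phi \<in> M" and c: "cd phi = dm p"
    and y: "y \<in> fams Y dY (cp p phi)"
  shows "pull_fam p y \<in> fams Y dY phi"
proof -
  have "y (crdm p k) \<in> {v \<in> Y. dY v = fib phi k}" if k: "k < crd (dm p)" for k
  proof -
    have "crdm p k \<in> {..<crd (cd (cp p phi))}"
      using crdm_less[OF fwt_mor[OF p] k] cod_comp[OF phi fwt_mor[OF p] c] by simp
    from PiE_mem[OF y this] show ?thesis using fib_comp_fwt[OF p phi c k] by simp
  qed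
  then show ?thesis using c unfolding pull_fam_def by auto
qed

lemma push_fam_mem:
  assumes p: "fwt C p" and phi: "phi \<in> M" and c: "cd phi = dm p"
    and z: "z \<in> fams Y dY phi"
  shows "push_fam p z \<in> fams Y dY (cp p phi)"
proof -
  have "z (senum (Sfib p j) 0) \<in> {v \<in> Y. dY v = fib (cp p phi) j}" if j: "j < crd (cd p)" for j
    using z c fwt_senum_Sfib[OF p j] fib_comp_fwt[OF p phi c, of "senum (Sfib p j) 0"] by auto
  then show ?thesis using cod_comp[OF phi fwt_mor[OF p] c] unfolding push_fam_def by auto
qed

lemma push_pull_fam:
  assumes "fwt C p" "y \<in> (\<Pi>\<^sub>E j \<in> {..<crd (cd p)}. Y j)"
  shows "push_fam p (pull_fam p y) = y"
  using assms fwt_senum_Sfib[OF assms(1)]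
  by (auto intro!: extensionalityI[of _ "{..<crd (cd p)}"] simp: push_fam_def pull_fam_def PiE_iff)

lemma pull_push_fam:
  assumes "fwt C p" "z \<in> (\<Pi>\<^sub>E k \<in> {..<crd (dm p)}. Z k)"
  shows "pull_fam p (push_fam p z) = z"
  using assms fwt_Sfib_eq[OF assms(1)] crdm_less[OF fwt_mor[OF assms(1)]]
  by (auto intro!: extensionalityI[of _ "{..<crd (dm p)}"] simp: push_fam_def pull_fam_def PiE_iff)

lemma rgt_lam_assoc_fibfam:
  assumes p: "fwt C p" and phi: "phi \<in> M" and c: "cd phi = dm p"
  shows "rgt C lam (assoc C ((x, p, fibfam C p), phi, z)) = (x, cp p phi, push_fam p z)"
proof -
  have "crd (fib p j) = 1" if "j < crd (cd p)" for j
    using p that triv_card unfolding fwt_def by auto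
  then show ?thesis
    using cod_comp[OF phi fwt_mor[OF p] c]
    by (auto simp: assoc_def rgt_def lam_def push_fam_def intro!: restrict_ext)
qed

lemma lam_tens_Uset:
  assumes "a \<in> tens C (Uset C) id (Uset C) id"
  shows "lam a = tdom C a" and "lam a \<in> Uset C"
proof -
  obtain u p z where a: "a = (u, p, z)" by (cases a)
  have p: "fwt C p" "u = cd p" "z = fibfam C p" "u \<in> Uset C"
    using assms unfolding a mem_tens_Uset by auto
  have "crd (cd p) = 1" using p Uset_iff triv_card by metis
  then have "lam a = fib p 0" unfolding a p(3) lam_def fibfam_def by simp
  also have "\<dots> = dm p" using triv_fib p fwt_mor Uset_iff by metis
  finally show "lam a = tdom C a" unfolding a tdom_def by simp
  have "triv C (fib p 0)" using p(1) \<open>crd (cd p) = 1\<close> unfolding fwt_def by simp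
  then show "lam a \<in> Uset C" using \<open>lam a = fib p 0\<close> Uset_iff by simp
qed

lemma lam_assoc_Uset:
  assumes b: "b \<in> tens C (tens C (Uset C) id (Uset C) id) (tdom C) (Uset C) id"
  shows "lam (lft lam b) = lam (rgt C lam (assoc C b))"
proof -
  obtain w phi z where bw: "b = (w, phi, z)" by (cases b)
  obtain u p y where w: "w = (u, p, y)" by (cases w)
  have phi: "fwt C phi" "z = fibfam C phi" "tdom C w = cd phi"
    and p: "fwt C p" "u = cd p" "y = fibfam C p" "u \<in> Uset C"
    using b unfolding bw w mem_tens_Uset by auto
  have c: "cd phi = dm p" using phi(3) unfolding w tdom_def by simp
  have one: "crd (cd p) = 1" using p Uset_iff triv_card by metis
  have "triv C (dm p)"
    using p fwt_mor triv_fib Uset_iff one unfolding fwt_def by (metis zero_less_one)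
  then have "senum (Sfib p 0) 0 = 0"
    using fwt_senum_Sfib(1)[OF p(1)] one triv_card by fastforce
  then show ?thesis
    unfolding bw w p(3) rgt_lam_assoc_fibfam[OF p(1) fwt_mor[OF phi(1)] c]
    using one by (simp add: lft_def lam_def push_fam_def)
qed

lemma rmod_Uset_lam: "rmod C (Uset C) id lam"
proof -
  have "lam (rho C id u) = u" if "u \<in> Uset C" for u
  proof -
    have u: "triv C u" using that Uset_iff by simp
    then have "cId C u \<in> M \<and> dm (cId C u) = u \<and> cd (cId C u) = u" using id_mor triv_ob by blast
    then show ?thesis using u triv_fib triv_card unfolding lam_def rho_def by simp
  qed
  then show ?thesis
    unfolding rmod_def using lam_tens_Uset lam_assoc_Uset by (auto simp: Uset_def)
qed

lemma rmod_Uset_unique: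
  "rmod C (Uset C) id r \<Longrightarrow> a \<in> tens C (Uset C) id (Uset C) id \<Longrightarrow> r a = lam a"
  using lam_tens_Uset unfolding rmod_def by auto

lemma expl_pairsI:
  assumes "phi \<in> M" "fwt C p" "cd phi = dm p" "x \<in> X" "dX x = cd p"
    and y: "y \<in> fams Y dY (cp p phi)"
  shows "((x, cp p phi, y), (rX (x, p, fibfam C p), phi, pull_fam p y))
           \<in> expl_pairs C X dX rX Y dY"
proof -
  have "y \<in> (\<Pi>\<^sub>E i \<in> {..<crd (cd p)}. {v \<in> Y. dY v = fib (cp p phi) i})"
    using y cod_comp[OF assms(1) fwt_mor[OF assms(2)] assms(3)] by simp
  then show ?thesis unfolding expl_pairs_def pull_fam_def using assms(1-5) by blast
qed

lemma expl_pairsE: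
  assumes "(a, b) \<in> expl_pairs C X dX rX Y dY"
  obtains x p phi y where "a = (x, cp p phi, y)" "b = (rX (x, p, fibfam C p), phi, pull_fam p y)"
    "phi \<in> M" "fwt C p" "cd phi = dm p" "x \<in> X" "dX x = cd p" "y \<in> fams Y dY (cp p phi)"
proof -
  obtain x p phi y where e: "a = (x, cp p phi, y)" "b = (rX (x, p, fibfam C p), phi, pull_fam p y)"
    "phi \<in> M" "fwt C p" "cd phi = dm p" "x \<in> X" "dX x = cd p"
    "y \<in> (\<Pi>\<^sub>E i \<in> {..<crd (cd p)}. {v \<in> Y. dY v = fib (cp p phi) i})"
    using assms unfolding expl_pairs_def pull_fam_def by blast
  moreover have "y \<in> fams Y dY (cp p phi)"
    using e(8) cod_comp[OF e(3) fwt_mor[OF e(4)] e(5)] by simp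
  ultimately show ?thesis using that by blast
qed

lemma mem_tens_tens_Uset:
  "((x, p, u), phi, z) \<in> tens C (tens C X dX (Uset C) id) (tdom C) Y dY \<longleftrightarrow>
     phi \<in> M \<and> fwt C p \<and> cd phi = dm p \<and> x \<in> X \<and> dX x = cd p \<and> u = fibfam C p
     \<and> z \<in> fams Y dY phi"
  unfolding mem_tens[of "(x, p, u)"] mem_tens_Uset tdom_def by (simp add: eq_commute[of "dm p"] conj_ac)

lemma coeq_pairsE:
  assumes "e \<in> coeq_pairs C X dX rX Y dY"
  obtains x p phi z where "e = ((rX (x, p, fibfam C p), phi, z), (x, cp p phi, push_fam p z))"
    "phi \<in> M" "fwt C p" "cd phi = dm p" "x \<in> X" "dX x = cd p" "z \<in> fams Y dY phi"
proof -
  obtain B where e: "e = (lft rX B, rgt C lam (assoc C B))"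
    and B: "B \<in> tens C (tens C X dX (Uset C) id) (tdom C) Y dY"
    using assms unfolding coeq_pairs_def by blast
  obtain x p u phi z where B_eq: "B = ((x, p, u), phi, z)" by (metis prod.collapse)
  have h: "phi \<in> M" "fwt C p" "cd phi = dm p" "x \<in> X" "dX x = cd p" "u = fibfam C p"
    "z \<in> fams Y dY phi"
    using B unfolding B_eq mem_tens_tens_Uset by blast+
  have "e = ((rX (x, p, fibfam C p), phi, z), (x, cp p phi, push_fam p z))"
    unfolding e B_eq h(6) lft_def rgt_lam_assoc_fibfam[OF h(2,1,3)] by simp
  then show ?thesis using that h by blast
qed

lemma coeq_pairsI:
  assumes h: "phi \<in> M" "fwt C p" "cd phi = dm p" "x \<in> X" "dX x = cd p" "z \<in> fams Y dY phi"
  shows "((rX (x, p, fibfam C p), phi, z), (x, cp p phi, push_fam p z)) \<in> coeq_pairs C X dX rX Y dY"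
proof -
  let ?B = "((x, p, fibfam C p), phi, z)"
  have "?B \<in> tens C (tens C X dX (Uset C) id) (tdom C) Y dY"
    unfolding mem_tens_tens_Uset using h by simp
  moreover have "(lft rX ?B, rgt C lam (assoc C ?B))
      = ((rX (x, p, fibfam C p), phi, z), (x, cp p phi, push_fam p z))"
    unfolding lft_def rgt_lam_assoc_fibfam[OF h(2,1,3)] by simp
  ultimately show ?thesis unfolding coeq_pairs_def mem_Collect_eq by metis
qed

lemma coeq_pairs_converse: "coeq_pairs C X dX rX Y dY = (expl_pairs C X dX rX Y dY)\<inverse>"
proof (intro equalityI subsetI)
  fix e assume "e \<in> coeq_pairs C X dX rX Y dY"
  then obtain x p phi z where e: "e = ((rX (x, p, fibfam C p), phi, z), (x, cp p phi, push_fam p z))"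
    and h: "phi \<in> M" "fwt C p" "cd phi = dm p" "x \<in> X" "dX x = cd p" "z \<in> fams Y dY phi"
    by (rule coeq_pairsE)
  have "pull_fam p (push_fam p z) = z" using pull_push_fam[OF h(2)] h(3,6) by simp
  then show "e \<in> (expl_pairs C X dX rX Y dY)\<inverse>"
    using expl_pairsI[where dX=dX and dY=dY and rX=rX, OF h(1-5) push_fam_mem[OF h(2,1,3,6)]]
    unfolding e by simp
next
  fix e assume "e \<in> (expl_pairs C X dX rX Y dY)\<inverse>"
  then obtain a b where e: "e = (b, a)" and ab: "(a, b) \<in> expl_pairs C X dX rX Y dY" by blast
  obtain x p phi y where a: "a = (x, cp p phi, y)" and b: "b = (rX (x, p, fibfam C p), phi, pull_fam p y)"
    and h: "phi \<in> M" "fwt C p" "cd phi = dm p" "x \<in> X" "dX x = cd p" "y \<in> fams Y dY (cp p phi)"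
    by (rule expl_pairsE[OF ab])
  have "push_fam p (pull_fam p y) = y"
    using push_pull_fam[OF h(2)] h(6) cod_comp[OF h(1) fwt_mor[OF h(2)] h(3)] by simp
  then show "e \<in> coeq_pairs C X dX rX Y dY"
    using coeq_pairsI[where dX=dX and dY=dY, OF h(1-5) pull_fam_mem[OF h(2,1,3,6)]] unfolding e a b by simp
qed

lemma wedge_rel_eq: "wedge_rel C X dX rX Y dY = genEq (tens C X dX Y dY) (expl_pairs C X dX rX Y dY)"
  unfolding wedge_rel_def coeq_pairs_converse genEq_converse ..

definition tens_act :: "(('y \<times> 'm \<times> (nat \<Rightarrow> 'o)) \<Rightarrow> 'y) \<Rightarrow> 'm \<Rightarrow> ('x \<times> 'm \<times> (nat \<Rightarrow> 'y))
    \<Rightarrow> ('x \<times> 'm \<times> (nat \<Rightarrow> 'y))" where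
  "tens_act rY s w = (case w of (x, phi, y) \<Rightarrow>
     (x, cp phi s, restrict (\<lambda>i. rY (y i, fibm s phi i, fibfam C (fibm s phi i))) {..<crd (cd phi)}))"

lemma rgt_assoc_fibfam:
  assumes phi: "phi \<in> M" and s: "fwt C s" and c: "cd s = dm phi"
  shows "rgt C rY (assoc C ((x, phi, y), s, fibfam C s)) = tens_act rY s (x, phi, y)"
  using fibfam_fibm[OF s phi c] cod_comp[OF fwt_mor[OF s] phi c]
  by (auto simp: assoc_def rgt_def tens_act_def intro!: restrict_ext)

lemma tens_act_mem:
  assumes rY: "rmod C Y dY rY" and w: "(x, phi, y) \<in> tens C X dX Y dY"
    and s: "fwt C s" and c: "cd s = dm phi"
  shows "tens_act rY s (x, phi, y) \<in> tens C X dX Y dY"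
proof -
  have h: "phi \<in> M" "x \<in> X" "dX x = cd phi" "y \<in> fams Y dY phi" using w unfolding mem_tens by blast+
  have sm: "s \<in> M" using fwt_mor[OF s] .
  have "rY (y i, fibm s phi i, fibfam C (fibm s phi i)) \<in> {v \<in> Y. dY v = fib (cp phi s) i}"
    if i: "i < crd (cd phi)" for i
  proof -
    have fm: "fibm s phi i \<in> M" "dm (fibm s phi i) = fib (cp phi s) i" "cd (fibm s phi i) = fib phi i"
      using fibm_mor[OF sm h(1) c i] by auto
    have "(y i, fibm s phi i, fibfam C (fibm s phi i)) \<in> tens C Y dY (Uset C) id"
      using PiE_mem[OF h(4)] i fm fwt_fibm[OF s h(1) c i] unfolding mem_tens_Uset by simp
    from rmod_closed[OF rY this] show ?thesis using fm(2) by (simp add: tdom_def)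
  qed
  then show ?thesis
    using h comp_mor[OF sm h(1) c] cod_comp[OF sm h(1) c] unfolding tens_act_def prod.case mem_tens by simp
qed

lemma tdom_expl_pairs: "(a, b) \<in> expl_pairs C X dX rX Y dY \<Longrightarrow> tdom C b = tdom C a"
  by (erule expl_pairsE) (simp add: tdom_def dom_comp fwt_mor)

lemma tens_act_expl_pairs:
  assumes rY: "rmod C Y dY rY" and ab: "(a, b) \<in> expl_pairs C X dX rX Y dY"
    and s: "fwt C s" and c: "cd s = tdom C a"
  shows "(tens_act rY s a, tens_act rY s b) \<in> expl_pairs C X dX rX Y dY"
proof -
  obtain x p phi y where a: "a = (x, cp p phi, y)" and b: "b = (rX (x, p, fibfam C p), phi, pull_fam p y)"
    and h: "phi \<in> M" "fwt C p" "cd phi = dm p" "x \<in> X" "dX x = cd p" "y \<in> fams Y dY (cp p phi)"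
    by (rule expl_pairsE[OF ab])
  have pm: "p \<in> M" and sm: "s \<in> M" using fwt_mor h(2) s by auto
  have cs: "cd s = dm phi" using c dom_comp[OF h(1) pm h(3)] unfolding a tdom_def by simp
  have cod_pphi: "cd (cp p phi) = cd p" using cod_comp[OF h(1) pm h(3)] .
  have assoc: "cp (cp p phi) s = cp p (cp phi s)" using comp_assoc[OF sm h(1) pm cs h(3)] by (rule sym)
  define y' where "y' = restrict (\<lambda>i. rY (y i, fibm s (cp p phi) i, fibfam C (fibm s (cp p phi) i)))
    {..<crd (cd (cp p phi))}"
  have act_a: "tens_act rY s a = (x, cp p (cp phi s), y')"
    unfolding a tens_act_def y'_def by (simp add: assoc)
  have a_tens: "(x, cp p phi, y) \<in> tens C X dX Y dY"
    unfolding mem_tens using h comp_mor[OF h(1) pm h(3)] cod_pphi by simp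
  have "cd s = dm (cp p phi)" using cs dom_comp[OF h(1) pm h(3)] by simp
  then have "tens_act rY s a \<in> tens C X dX Y dY" unfolding a by (rule tens_act_mem[OF rY a_tens s])
  then have y': "y' \<in> fams Y dY (cp p (cp phi s))" unfolding act_a mem_tens by blast
  have "restrict (\<lambda>i. rY (pull_fam p y i, fibm s phi i, fibfam C (fibm s phi i))) {..<crd (cd phi)}
      = pull_fam p y'"
    using fibm_comp_fwt[OF h(2,1,3) _ sm cs] crdm_less[OF pm] h(3) cod_pphi
    unfolding pull_fam_def y'_def by (auto intro!: restrict_ext)
  then have act_b: "tens_act rY s b = (rX (x, p, fibfam C p), cp phi s, pull_fam p y')"
    unfolding b tens_act_def by simp
  show ?thesis
    unfolding act_a act_b
    using expl_pairsI[where dX=dX and dY=dY and rX=rX, OF comp_mor[OF sm h(1) cs] h(2) _ h(4,5) y']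
      cod_comp[OF sm h(1) cs] h(3) by simp
qed

lemma tens_act_genEq:
  assumes rY: "rmod C Y dY rY" and s: "fwt C s"
    and ab: "(a, b) \<in> genEq (tens C X dX Y dY) (expl_pairs C X dX rX Y dY)" and c: "cd s = tdom C a"
  shows "(tens_act rY s a, tens_act rY s b) \<in> genEq (tens C X dX Y dY) (expl_pairs C X dX rX Y dY)"
proof (rule genEq_map[where P = "\<lambda>a. cd s = tdom C a", OF _ _ _ ab c])
  show "tens_act rY s w \<in> tens C X dX Y dY" if "w \<in> tens C X dX Y dY" "cd s = tdom C w" for w
  proof -
    obtain x phi y where w: "w = (x, phi, y)" by (cases w)
    have "cd s = dm phi" using that(2) unfolding w tdom_def by simp
    from tens_act_mem[OF rY that(1)[unfolded w] s this] show ?thesis unfolding w .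
  qed
  show "cd s = tdom C b \<longleftrightarrow> cd s = tdom C a" if "(a, b) \<in> expl_pairs C X dX rX Y dY" for a b
    using tdom_expl_pairs[OF that] by simp
  show "(tens_act rY s a, tens_act rY s b) \<in> expl_pairs C X dX rX Y dY"
    if "(a, b) \<in> expl_pairs C X dX rX Y dY" "cd s = tdom C a" for a b
    using tens_act_expl_pairs[OF rY that(1) s that(2)] .
qed

lemma tens_tens_UsetE:
  assumes "b \<in> tens C (tens C X dX Y dY) (tdom C) (Uset C) id"
  obtains w s where "b = (w, s, fibfam C s)" "w \<in> tens C X dX Y dY" "fwt C s" "cd s = tdom C w"
    "rgt C rY (assoc C b) = tens_act rY s w"
proof -
  obtain w s z where b: "b = (w, s, z)" by (cases b)
  obtain x phi y where w: "w = (x, phi, y)" by (cases w)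
  have h: "w \<in> tens C X dX Y dY" "fwt C s" "cd s = tdom C w" "z = fibfam C s"
    using assms unfolding b mem_tens_Uset by auto
  have "phi \<in> M" "cd s = dm phi" using h(1,3) unfolding w mem_tens tdom_def by simp_all
  then have "rgt C rY (assoc C b) = tens_act rY s w"
    unfolding b w h(4) by (rule rgt_assoc_fibfam[OF _ h(2)])
  then show ?thesis using that h unfolding b by blast
qed

lemma wedge_action_exists:
  assumes rY: "rmod C Y dY rY"
  shows "\<exists>r'. \<forall>b \<in> tens C (tens C X dX Y dY) (tdom C) (Uset C) id.
     r' (lft (wcls C X dX rX Y dY) b) = wcls C X dX rX Y dY (rgt C rY (assoc C b))"
proof -
  let ?T = "tens C X dX Y dY"
  let ?G = "genEq ?T (expl_pairs C X dX rX Y dY)"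
  let ?p = "wcls C X dX rX Y dY"
  have p: "?p a = ?G `` {a}" for a unfolding wcls_def wedge_rel_eq ..
  have act_cong: "?p (tens_act rY s w') = ?p (tens_act rY s w)"
    if "w' \<in> ?T" "?p w' = ?p w" "fwt C s" "cd s = tdom C w" for w w' s
  proof -
    have "(w, w') \<in> ?G" using genEq_refl[OF that(1)] that(2) unfolding p by auto
    from tens_act_genEq[OF rY that(3) this that(4)] show ?thesis unfolding p by (metis genEq_Image_eq)
  qed
  define r' where "r' = (\<lambda>(c, s, _ :: nat \<Rightarrow> 'o).
    ?p (tens_act rY s (SOME w. w \<in> ?T \<and> ?p w = c \<and> tdom C w = cd s)))"
  have "r' (lft ?p b) = ?p (rgt C rY (assoc C b))" if b_in: "b \<in> tens C ?T (tdom C) (Uset C) id" for b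
  proof -
    obtain w s where b: "b = (w, s, fibfam C s)" "w \<in> ?T" "fwt C s" "cd s = tdom C w"
      and assoc: "rgt C rY (assoc C b) = tens_act rY s w"
      using tens_tens_UsetE[OF b_in] .
    define w' where "w' = (SOME w'. w' \<in> ?T \<and> ?p w' = ?p w \<and> tdom C w' = cd s)"
    have "\<exists>w'. w' \<in> ?T \<and> ?p w' = ?p w \<and> tdom C w' = cd s"
      using b(2,4) by (intro exI[of _ w]) simp
    then have w': "w' \<in> ?T" "?p w' = ?p w" unfolding w'_def by (metis (mono_tags, lifting) someI_ex)+
    have "r' (lft ?p b) = ?p (tens_act rY s w')" unfolding r'_def b(1) lft_def w'_def by simp
    then show ?thesis unfolding assoc using act_cong[OF w' b(3,4)] by simp
  qed
  then show ?thesis by blast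
qed

lemma wedge_action_formula:
  assumes r': "\<forall>b \<in> tens C (tens C X dX Y dY) (tdom C) (Uset C) id.
     r' (lft (wcls C X dX rX Y dY) b) = wcls C X dX rX Y dY (rgt C rY (assoc C b))"
    and w: "(x, phi, y) \<in> tens C X dX Y dY" and s: "fwt C s" and c: "cd s = dm phi"
  shows "r' (wcls C X dX rX Y dY (x, phi, y), s, fibfam C s)
    = wcls C X dX rX Y dY (x, cp phi s,
        restrict (\<lambda>i. rY (y i, fibm s phi i, fibfam C (fibm s phi i))) {..<crd (cd phi)})"
proof -
  have b: "((x, phi, y), s, fibfam C s) \<in> tens C (tens C X dX Y dY) (tdom C) (Uset C) id"
    using w s c unfolding mem_tens_Uset tdom_def by simp
  have "phi \<in> M" using w unfolding mem_tens by blast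
  from r' b have "r' (lft (wcls C X dX rX Y dY) ((x, phi, y), s, fibfam C s))
      = wcls C X dX rX Y dY (rgt C rY (assoc C ((x, phi, y), s, fibfam C s)))" by blast
  then show ?thesis unfolding rgt_assoc_fibfam[OF \<open>phi \<in> M\<close> s c] lft_def tens_act_def by simp
qed

end

theorem proposition9p2:
  fixes C :: "('o, 'm) opcat"
    and X :: "'x set" and dX :: "'x \<Rightarrow> 'o" and rX :: "('x \<times> 'm \<times> (nat \<Rightarrow> 'o)) \<Rightarrow> 'x"
    and Y :: "'y set" and dY :: "'y \<Rightarrow> 'o" and rY :: "('y \<times> 'm \<times> (nat \<Rightarrow> 'o)) \<Rightarrow> 'y"
  assumes "operadic C" and "rmod C X dX rX" and "rmod C Y dY rY"
  shows
    "(rmod C (Uset C) id lam \<and>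
      (\<forall>r r'. rmod C (Uset C) id r \<and> rmod C (Uset C) id r' \<longrightarrow>
         (\<forall>a \<in> tens C (Uset C) id (Uset C) id. r a = r' a))) \<and>
     wedge_rel C X dX rX Y dY = genEq (tens C X dX Y dY) (expl_pairs C X dX rX Y dY) \<and>
     (let p = wcls C X dX rX Y dY;
          determ = (\<lambda>r'. \<forall>b \<in> tens C (tens C X dX Y dY) (tdom C) (Uset C) id.
                           r' (lft p b) = p (rgt C rY (assoc C b)))
      in (\<exists>r'. determ r') \<and>
         (\<forall>r'. determ r' \<longrightarrow>
            (\<forall>x phi y s. phi \<in> cMor C \<and> x \<in> X \<and> dX x = cCod C phi \<and>
                y \<in> (\<Pi>\<^sub>E i \<in> {..<cCard C (cCod C phi)}. {v \<in> Y. dY v = cFib C phi i}) \<and>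
                fwt C s \<and> cCod C s = cDom C phi \<longrightarrow>
               r' (p (x, phi, y), s, fibfam C s)
                 = p (x, cComp C phi s,
                      restrict (\<lambda>i. rY (y i, cFibm C s phi i, fibfam C (cFibm C s phi i)))
                               {..<cCard C (cCod C phi)}))))"
proof -
  interpret operadic_category C by (rule operadic_category.intro) (rule assms(1))
  show ?thesis
    unfolding Let_def
  proof (intro conjI allI impI ballI)
    show "rmod C (Uset C) id lam" by (rule rmod_Uset_lam)
    show "r a = r' a" if "rmod C (Uset C) id r \<and> rmod C (Uset C) id r'"
      and "a \<in> tens C (Uset C) id (Uset C) id" for r r' a
      using rmod_Uset_unique that by metis
    show "wedge_rel C X dX rX Y dY = genEq (tens C X dX Y dY) (expl_pairs C X dX rX Y dY)"
      by (rule wedge_rel_eq)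
    show "\<exists>r'. \<forall>b \<in> tens C (tens C X dX Y dY) (tdom C) (Uset C) id.
        r' (lft (wcls C X dX rX Y dY) b) = wcls C X dX rX Y dY (rgt C rY (assoc C b))"
      by (rule wedge_action_exists[OF assms(3)])
  next
    fix r' x phi y s
    assume r': "\<forall>b \<in> tens C (tens C X dX Y dY) (tdom C) (Uset C) id.
        r' (lft (wcls C X dX rX Y dY) b) = wcls C X dX rX Y dY (rgt C rY (assoc C b))"
      and "phi \<in> M \<and> x \<in> X \<and> dX x = cd phi \<and> y \<in> fams Y dY phi \<and> fwt C s \<and> cd s = dm phi"
    then show "r' (wcls C X dX rX Y dY (x, phi, y), s, fibfam C s)
      = wcls C X dX rX Y dY (x, cp phi s,
          restrict (\<lambda>i. rY (y i, fibm s phi i, fibfam C (fibm s phi i))) {..<crd (cd phi)})"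
      using wedge_action_formula[OF r'] unfolding mem_tens by blast
  qed
qed

end
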